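(* Let $q$ be a prime power, $e\ge 2$, $r$ a positive integer, $a\in\mathbb{F}_{q^e}$ with $a\neq 0$, $f(x)=x^r(x^{q-1}+a)$, and $\ell=q^{e-1}+\cdots+q+1$. If $r\bmod \ell\neq hq+1$ for every integer $h$, then $f(x)$ does not permute $\mathbb{F}_{q^e}$.
   Context: $r\bmod\ell$ denotes the least nonnegative residue of $r$ modulo $\ell$. *)

theory Defs
  imports "HOL-Computational_Algebra.Primes"
begin

end

theory Submission
  imports Defs "HOL-Number_Theory.Residues" "HOL-Computational_Algebra.Polynomial"
begin

text \<open>
  Let \<open>N = q^(e-1) - 1\<close>, \<open>s = 1 + q + ... + q^(e-2)\<close> and \<open>l = q s + 1\<close>, so that
  \<open>N = (q - 1) s\<close> and \<open>|F| - 1 = (q - 1) l\<close>. If \<open>f\<close> permutes \<open>F\<close>, then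
  \<open>\<Sum>x. f x ^ N = \<Sum>x. x ^ N = 0\<close> because \<open>0 < N < |F| - 1\<close>.
  On the other hand \<open>N + 1\<close> is a power of the characteristic, so
  \<open>(y + a)^N = \<Sum>u\<le>N. y^u (-a)^(N-u)\<close>, and \<open>\<Sum>x. x^m\<close> is \<open>-1\<close> or \<open>0\<close> according as
  \<open>|F| - 1\<close> divides \<open>m\<close> or not. The \<open>u\<close>-th term of \<open>f x ^ N\<close> has exponent
  \<open>(q - 1)(r s + u)\<close>, so exactly the \<open>u \<le> N\<close> with \<open>l dvd r s + u\<close> contribute.
  As \<open>N < l\<close> there is at most one such \<open>u\<close>, and the condition on \<open>r mod l\<close> provides one;
  hence \<open>\<Sum>x. f x ^ N = -(-a)^(N-u) \<noteq> 0\<close>.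
\<close>

lemma power_eq_geometric_sum_nat:
  fixes q :: nat
  assumes "q \<ge> 1"
  shows "q ^ n = (q - 1) * (\<Sum>i<n. q ^ i) + 1"
proof -
  obtain m where "q = Suc m"
    using assms by (cases q) auto
  then show ?thesis
    by (induction n) (simp_all add: algebra_simps)
qed

lemma sum_power_lessThan_Suc_nat:
  fixes q :: nat
  shows "(\<Sum>i<Suc n. q ^ i) = q * (\<Sum>i<n. q ^ i) + 1"
  by (simp add: sum.lessThan_Suc_shift sum_distrib_left del: sum.lessThan_Suc)

lemma exists_small_shift_dvd:
  fixes q s r :: nat
  assumes "q \<ge> 2" and no_residue: "\<forall>h. r mod (q * s + 1) \<noteq> h * q + 1"
  shows "\<exists>u \<le> (q - 1) * s. q * s + 1 dvd r * s + u"
proof -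
  \<comment> \<open>Since \<open>q s = -1\<close> modulo \<open>l\<close>, we have \<open>(h q + c) s = c s - h\<close>,
    which the witnesses below cancel; the case \<open>c = 1\<close> is the excluded one.\<close>
  define l where "l = q * s + 1"
  define h c where "h = r mod l div q" and "c = r mod l mod q"
  have r_mod: "r mod l = h * q + c"
    by (simp add: h_def c_def)
  have "c < q"
    using assms(1) by (simp add: c_def)
  have "h * q + c < q * s + 1"
    unfolding r_mod[symmetric] l_def by simp
  then have "h * q + c \<le> s * q"
    by (simp add: mult.commute)
  have reduce: "l dvd r * s + u \<longleftrightarrow> l dvd (h * q + c) * s + u" for u
    unfolding r_mod[symmetric] dvd_eq_mod_eq_0 by (metis mod_add_left_eq mod_mult_left_eq)
  have "c \<noteq> 1"
    using no_residue[rule_format, of h] r_mod l_def by auto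
  then consider "c = 0" | "c \<ge> 2"
    by linarith
  then obtain u k where "u \<le> (q - 1) * s" and "(h * q + c) * s + u = k * l"
  proof cases
    case 1
    have "h * q \<le> s * q"
      using \<open>h * q + c \<le> s * q\<close> by linarith
    then have "h \<le> s"
      using assms(1) by simp
    also have "\<dots> \<le> (q - 1) * s"
      using mult_le_mono1[of 1 "q - 1" s] assms(1) by auto
    finally have "h \<le> (q - 1) * s" .
    moreover have "(h * q + c) * s + h = h * l"
      using 1 by (simp add: l_def algebra_simps)
    ultimately show ?thesis
      using that by blast
  next
    case 2
    have "h * q < s * q"
      using \<open>h * q + c \<le> s * q\<close> 2 by linarith
    then have "h < s"
      by simp
    obtain t where t: "q = c + t"
      using \<open>c < q\<close> less_imp_add_positive by blast
    define u where "u = h + 1 + t * s"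
    have "u \<le> (1 + t) * s"
      using \<open>h < s\<close> by (simp add: u_def)
    also have "\<dots> \<le> (q - 1) * s"
      using 2 t by (intro mult_le_mono1) linarith
    finally have "u \<le> (q - 1) * s" .
    moreover have "(h * q + c) * s + u = (h + 1) * l"
      by (simp add: u_def l_def t algebra_simps)
    ultimately show ?thesis
      using that by blast
  qed
  moreover have "l dvd r * s + u"
    using reduce \<open>(h * q + c) * s + u = k * l\<close> by simp
  ultimately show ?thesis
    unfolding l_def by blast
qed

lemma finite_field_prime_CHAR: "prime CHAR('a::{field,finite})"
  using prime_CHAR_semidom finite_imp_CHAR_pos[where ?'a = 'a] by auto

lemma finite_field_CHAR_eq:
  fixes p n :: nat
  assumes "prime p" and "card (UNIV :: 'a::{field,finite} set) = p ^ n"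
  shows "CHAR('a) = p"
proof -
  have "CHAR('a) dvd p ^ n"
    using CHAR_dvd_CARD[where ?'a = 'a] assms(2) by simp
  then have "CHAR('a) dvd p"
    using finite_field_prime_CHAR prime_dvd_power by blast
  then show ?thesis
    using finite_field_prime_CHAR assms(1) primes_dvd_imp_eq by blast
qed

lemma finite_field_card_ge_2: "card (UNIV :: 'a::{field,finite} set) \<ge> 2"
proof -
  have "card {0, 1 :: 'a} \<le> card (UNIV :: 'a set)"
    by (rule card_mono) auto
  then show ?thesis
    by simp
qed

lemma finite_field_power_card_minus_one:
  fixes x :: "'a::{field,finite}"
  assumes "x \<noteq> 0"
  shows "x ^ (card (UNIV :: 'a set) - 1) = 1"
proof -
  have "(\<Prod>y\<in>UNIV-{0}. x * y) = x ^ card (UNIV - {0::'a}) * \<Prod>(UNIV - {0::'a})"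
    by (simp add: prod.distrib)
  also have "card (UNIV - {0::'a}) = card (UNIV :: 'a set) - 1"
    by (simp add: card_Diff_singleton)
  also have "(\<Prod>y\<in>UNIV-{0}. x * y) = (\<Prod>y\<in>UNIV-{0}. y)"
    by (rule prod.reindex_bij_witness[of _ "\<lambda>y. y / x" "\<lambda>y. x * y"]) (use assms in auto)
  finally have "\<Prod>(UNIV - {0::'a}) = x ^ (card (UNIV :: 'a set) - 1) * \<Prod>(UNIV - {0::'a})" .
  then show ?thesis
    by simp
qed

lemma finite_field_card_minus_one_le:
  fixes g :: nat
  assumes "g > 0" and "\<forall>c :: 'a::{field,finite}. c \<noteq> 0 \<longrightarrow> c ^ g = 1"
  shows "card (UNIV :: 'a set) - 1 \<le> g"
proof -
  define P :: "'a poly" where "P = monom 1 g + (- 1)"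
  have "degree P = g"
    unfolding P_def using assms(1) by (subst degree_add_eq_left) (simp_all add: degree_monom_eq)
  then have "P \<noteq> 0"
    using assms(1) by auto
  have "UNIV - {0} \<subseteq> {x. poly P x = 0}"
    using assms(2) by (auto simp: P_def poly_monom)
  then have "card (UNIV - {0 :: 'a}) \<le> card {x. poly P x = 0}"
    using poly_roots_finite[OF \<open>P \<noteq> 0\<close>] by (rule card_mono[rotated])
  also have "\<dots> \<le> g"
    using card_poly_roots_bound[OF \<open>P \<noteq> 0\<close>] \<open>degree P = g\<close> by simp
  finally show ?thesis
    by (simp add: card_Diff_singleton)
qed

lemma finite_field_exists_power_ne_one:
  assumes "m > 0" and "\<not> (card (UNIV :: 'a set) - 1) dvd m"
  shows "\<exists>c :: 'a::{field,finite}. c \<noteq> 0 \<and> c ^ m \<noteq> 1"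
proof (rule ccontr)
  let ?n = "card (UNIV :: 'a set) - 1"
  define g where "g = gcd m ?n"
  assume "\<not> ?thesis"
  then have power_m: "c ^ m = 1" if "c \<noteq> 0" for c :: 'a
    using that by blast
  have "c ^ g = 1" if "c \<noteq> 0" for c :: 'a
  proof -
    obtain x y where xy: "m * x = ?n * y + g"
      using bezout_nat[of m ?n] assms(1) g_def by auto
    have "c ^ g = (c ^ ?n) ^ y * c ^ g"
      using finite_field_power_card_minus_one[OF that] by simp
    also have "\<dots> = (c ^ m) ^ x"
      by (simp add: xy flip: power_mult power_add)
    finally show ?thesis
      using power_m[OF that] by simp
  qed
  moreover have "g > 0"
    using assms(1) by (simp add: g_def)
  ultimately have "?n \<le> g"
    using finite_field_card_minus_one_le by blast
  moreover have "g dvd ?n" and "?n > 0"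
    using finite_field_card_ge_2[where ?'a = 'a] by (simp_all add: g_def)
  ultimately have "g = ?n"
    using dvd_imp_le by (simp add: le_antisym)
  then show False
    using assms(2) g_def by (metis gcd_dvd1)
qed

lemma finite_field_sum_powers:
  assumes "m > 0"
  shows "(\<Sum>x :: 'a::{field,finite} \<in> UNIV. x ^ m) =
    (if (card (UNIV :: 'a set) - 1) dvd m then -1 else 0)"
proof (cases "(card (UNIV :: 'a set) - 1) dvd m")
  case True
  have "(\<Sum>x :: 'a \<in> UNIV. x ^ m) = (\<Sum>x \<in> UNIV - {0}. x ^ m)"
    using assms by (intro sum.mono_neutral_right) auto
  also have "\<dots> = (\<Sum>x :: 'a \<in> UNIV - {0}. 1)"
  proof (intro sum.cong refl)
    fix x :: 'a
    assume "x \<in> UNIV - {0}"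
    then show "x ^ m = 1"
      using True finite_field_power_card_minus_one[of x] by (auto elim!: dvdE simp: power_mult)
  qed
  also have "\<dots> = of_nat (card (UNIV :: 'a set)) - 1"
    using finite_field_card_ge_2[where ?'a = 'a] by (simp add: card_Diff_singleton of_nat_diff)
  also have "of_nat (card (UNIV :: 'a set)) = (0 :: 'a)"
    using CHAR_dvd_CARD of_nat_eq_0_iff_char_dvd by blast
  finally show ?thesis
    using True by simp
next
  case False
  obtain c :: 'a where "c \<noteq> 0" and "c ^ m \<noteq> 1"
    using finite_field_exists_power_ne_one[OF assms False] by blast
  have "(\<Sum>x \<in> UNIV. x ^ m) = (\<Sum>x :: 'a \<in> UNIV. (c * x) ^ m)"
    by (rule sum.reindex_bij_witness[of _ "\<lambda>y. c * y" "\<lambda>y. y / c"]) (use \<open>c \<noteq> 0\<close> in auto)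
  also have "\<dots> = c ^ m * (\<Sum>x \<in> UNIV. x ^ m)"
    by (simp add: power_mult_distrib sum_distrib_left)
  finally have "(c ^ m - 1) * (\<Sum>x :: 'a \<in> UNIV. x ^ m) = 0"
    by (simp add: algebra_simps)
  then show ?thesis
    using False \<open>c ^ m \<noteq> 1\<close> by simp
qed

lemma permutation_sum_powers_eq_0:
  fixes f :: "'a::{field,finite} \<Rightarrow> 'a"
  assumes "bij f" and "0 < m" and "m < card (UNIV :: 'a set) - 1"
  shows "(\<Sum>x \<in> UNIV. f x ^ m) = 0"
proof -
  have "(\<Sum>x \<in> UNIV. f x ^ m) = (\<Sum>x \<in> UNIV. x ^ m)"
    using sum.reindex_bij_betw[of f UNIV UNIV "\<lambda>y. y ^ m"] assms(1) by (simp add: bij_def bij_betw_def)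
  also have "\<dots> = 0"
    using finite_field_sum_powers[OF assms(2), where ?'a = 'a] assms(2,3) by (auto dest: dvd_imp_le)
  finally show ?thesis .
qed

lemma power_diff_eq_sum_if_Suc_eq_CHAR_power:
  fixes y b :: "'a::idom"
  assumes "prime CHAR('a)" and "Suc N = CHAR('a) ^ n" and "n \<ge> 1"
  shows "(y - b) ^ N = (\<Sum>u\<le>N. y ^ u * b ^ (N - u))"
proof (cases "y = b")
  case False
  have "(y - b) ^ Suc N + b ^ Suc N = y ^ Suc N"
    using freshmans_dream'[OF assms(1,2), of "y - b" b] by simp
  then have "(y - b) * (y - b) ^ N = y ^ Suc N - b ^ Suc N"
    by (simp add: eq_diff_eq)
  also have "\<dots> = (y - b) * (\<Sum>u\<le>N. y ^ u * b ^ (N - u))"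
    by (simp only: diff_power_eq_sum lessThan_Suc_atMost)
  finally show ?thesis
    using False by simp
next
  case True
  have "CHAR('a) \<le> CHAR('a) ^ n"
    using assms(1,3) prime_ge_2_nat[of "CHAR('a)"] by (intro self_le_power) auto
  then have "N \<ge> 1"
    using assms(2) prime_ge_2_nat[OF assms(1)] by linarith
  have "(\<Sum>u\<le>N. y ^ u * b ^ (N - u)) = of_nat (Suc N) * b ^ N"
    using True by (simp flip: power_add)
  also have "of_nat (Suc N) = (0 :: 'a)"
    using assms(2,3) by (simp add: power_0_left)
  finally show ?thesis
    using True \<open>N \<ge> 1\<close> by simp
qed

lemma sum_power_monomial_times_binomial:
  fixes b :: "'a::{field,finite}"
  assumes "Suc N = CHAR('a) ^ n" and "n \<ge> 1"
  shows "(\<Sum>x \<in> UNIV. (x ^ r * (x ^ k - b)) ^ N) =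
    (\<Sum>u\<le>N. b ^ (N - u) * (\<Sum>x \<in> UNIV. x ^ (r * N + k * u)))"
proof -
  have "(x ^ r * (x ^ k - b)) ^ N = (\<Sum>u\<le>N. b ^ (N - u) * x ^ (r * N + k * u))" for x :: 'a
  proof -
    have "(x ^ r * (x ^ k - b)) ^ N = x ^ (r * N) * (x ^ k - b) ^ N"
      by (simp add: power_mult_distrib power_mult)
    also have "\<dots> = x ^ (r * N) * (\<Sum>u\<le>N. (x ^ k) ^ u * b ^ (N - u))"
      using power_diff_eq_sum_if_Suc_eq_CHAR_power[OF finite_field_prime_CHAR assms] by simp
    also have "\<dots> = (\<Sum>u\<le>N. b ^ (N - u) * x ^ (r * N + k * u))"
      unfolding sum_distrib_left by (intro sum.cong refl) (simp add: power_add mult_ac flip: power_mult)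
    finally show ?thesis .
  qed
  then show ?thesis
    by (simp add: sum_distrib_left sum.swap[of _ UNIV])
qed

lemma dvd_add_iff_eq_if_less:
  fixes l c u v N :: nat
  assumes "N < l" and "u \<le> N" and "v \<le> N" and "l dvd c + v"
  shows "l dvd c + u \<longleftrightarrow> u = v"
proof
  assume "l dvd c + u"
  then have "[c + u = c + v] (mod l)"
    using assms(4) by (simp add: cong_def dvd_eq_mod_eq_0)
  then have "[u = v] (mod l)"
    by (simp add: cong_add_lcancel_nat)
  then show "u = v"
    using assms(1-3) by (simp add: cong_def)
qed (use assms(4) in simp)

lemma sum_power_monomial_times_binomial_eq:
  fixes b :: "'a::{field,finite}"
  assumes "Suc N = CHAR('a) ^ n" and "n \<ge> 1"
    and card: "card (UNIV :: 'a set) - 1 = k * l" and "N = k * s" and "N < l"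
    and "0 < r" and "0 < N" and "v \<le> N" and "l dvd r * s + v"
  shows "(\<Sum>x \<in> UNIV. (x ^ r * (x ^ k - b)) ^ N) = - (b ^ (N - v))"
proof -
  have "(\<Sum>x :: 'a \<in> UNIV. x ^ (r * N + k * u)) = (if u = v then -1 else 0)" if "u \<le> N" for u
  proof -
    have exponent: "r * N + k * u = k * (r * s + u)"
      by (simp add: \<open>N = k * s\<close> algebra_simps)
    have "k > 0"
      using \<open>0 < N\<close> \<open>N = k * s\<close> by simp
    then have "card (UNIV :: 'a set) - 1 dvd r * N + k * u \<longleftrightarrow> l dvd r * s + u"
      by (simp only: card exponent nat_mult_dvd_cancel_disj) simp
    also have "\<dots> \<longleftrightarrow> u = v"
      using dvd_add_iff_eq_if_less[OF \<open>N < l\<close> that \<open>v \<le> N\<close> \<open>l dvd r * s + v\<close>] .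
    finally have dvd_iff: "card (UNIV :: 'a set) - 1 dvd r * N + k * u \<longleftrightarrow> u = v" .
    have pos: "0 < r * N + k * u"
      using \<open>0 < r\<close> \<open>0 < N\<close> by simp
    show ?thesis
      unfolding finite_field_sum_powers[OF pos] dvd_iff ..
  qed
  note inner_sum = this
  have "(\<Sum>x \<in> UNIV. (x ^ r * (x ^ k - b)) ^ N) =
      (\<Sum>u\<le>N. b ^ (N - u) * (\<Sum>x \<in> UNIV. x ^ (r * N + k * u)))"
    by (rule sum_power_monomial_times_binomial[OF assms(1,2)])
  also have "\<dots> = (\<Sum>u\<le>N. if u = v then - (b ^ (N - u)) else 0)"
    using inner_sum by (intro sum.cong) auto
  also have "\<dots> = - (b ^ (N - v))"
    using \<open>v \<le> N\<close> by simp
  finally show ?thesis .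
qed

lemma not_bij_monomial_times_binomial:
  fixes b :: "'a::{field,finite}"
  assumes "Suc N = CHAR('a) ^ n" and "n \<ge> 1"
    and card: "card (UNIV :: 'a set) - 1 = k * l" and "N = k * s" and "N < l"
    and "0 < r" and "0 < N" and "v \<le> N" and "l dvd r * s + v" and "b \<noteq> 0"
  shows "\<not> bij (\<lambda>x :: 'a. x ^ r * (x ^ k - b))"
proof
  assume "bij (\<lambda>x :: 'a. x ^ r * (x ^ k - b))"
  moreover have "N < card (UNIV :: 'a set) - 1"
  proof -
    have "1 * l \<le> k * l"
      using \<open>0 < N\<close> \<open>N = k * s\<close> by (intro mult_le_mono1) simp
    then show ?thesis
      unfolding card using \<open>N < l\<close> by linarith
  qed
  ultimately have "(\<Sum>x \<in> UNIV. (x ^ r * (x ^ k - b)) ^ N) = 0"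
    using permutation_sum_powers_eq_0 \<open>0 < N\<close> by blast
  then show False
    using sum_power_monomial_times_binomial_eq[OF assms(1-9)] \<open>b \<noteq> 0\<close> by simp
qed

theorem proposition4p1:
  fixes q e r :: nat and a :: "'a::{field,finite}"
  assumes "\<exists>p k. prime p \<and> k \<ge> 1 \<and> q = p ^ k"
    and "e \<ge> 2"
    and "card (UNIV :: 'a set) = q ^ e"
    and "r > 0"
    and "a \<noteq> 0"
    and "\<forall>h::int. int (r mod (\<Sum>i<e. q ^ i)) \<noteq> h * int q + 1"
  shows "\<not> bij (\<lambda>x::'a. x ^ r * (x ^ (q - 1) + a))"
proof -
  obtain p k where "prime p" and "k \<ge> 1" and q: "q = p ^ k"
    using assms(1) by blast
  then have "q \<ge> 2"
    using prime_ge_2_nat[of p] self_le_power[of p k] by simp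
  have "CHAR('a) = p"
    by (rule finite_field_CHAR_eq[OF \<open>prime p\<close>, of "k * e"]) (simp add: assms(3) q power_mult)
  obtain d where e: "e = Suc d" and "d \<ge> 1"
    using assms(2) by (cases e) auto
  define s where "s = (\<Sum>i<d. q ^ i)"
  have l: "(\<Sum>i<e. q ^ i) = q * s + 1"
    unfolding e s_def by (rule sum_power_lessThan_Suc_nat)
  have N: "Suc ((q - 1) * s) = CHAR('a) ^ (k * d)"
    using power_eq_geometric_sum_nat[of q d] \<open>q \<ge> 2\<close>
    by (simp add: s_def \<open>CHAR('a) = p\<close> q power_mult)
  have card: "card (UNIV :: 'a set) - 1 = (q - 1) * (q * s + 1)"
    using power_eq_geometric_sum_nat[of q e] assms(3) l \<open>q \<ge> 2\<close> by simp
  have "\<forall>h. r mod (q * s + 1) \<noteq> h * q + 1"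
    using assms(6) l by (metis of_nat_mult of_nat_add of_nat_1)
  with exists_small_shift_dvd[OF \<open>q \<ge> 2\<close>]
  obtain v where "v \<le> (q - 1) * s" and "q * s + 1 dvd r * s + v"
    by blast
  moreover have "(q - 1) * s < q * s + 1"
    by (simp add: diff_mult_distrib)
  moreover have "0 < (q - 1) * s"
    using member_le_sum[of 0 "{..<d}" "\<lambda>i. q ^ i"] \<open>d \<ge> 1\<close> \<open>q \<ge> 2\<close>
    by (simp add: s_def)
  ultimately have "\<not> bij (\<lambda>x :: 'a. x ^ r * (x ^ (q - 1) - - a))"
    using \<open>k \<ge> 1\<close> \<open>d \<ge> 1\<close> assms(4,5)
    by (intro not_bij_monomial_times_binomial[OF N _ card refl]) simp_all
  then show ?thesis
    by simp
qed

end
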